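(* Let $G$ be an abelian group and $\{a_i\}_{i\ge0}$ an infinite sequence of elements of $G$. If $\{a_i-a_0\mid i\ge1\}$ is linearly independent in $G$, then there exists $N\ge0$ such that $\{a_i\mid i>N\}$ is linearly independent in $G$.
   Context: A family $\{x_i\}$ of elements of an abelian group is linearly independent if $\sum_i c_ix_i=0$ with $c_i\in\mathbb{Z}$, only finitely many nonzero, implies all $c_i=0$. *)

theory Defs
  imports Main
begin

definition zsmult :: "int \<Rightarrow> 'a::ab_group_add \<Rightarrow> 'a" where
  "zsmult k x = (if 0 \<le> k then (((+) x) ^^ nat k) 0 else - ((((+) x) ^^ nat (- k)) 0))"

definition lin_indep_family :: "'i set \<Rightarrow> ('i \<Rightarrow> 'a::ab_group_add) \<Rightarrow> bool" where
  "lin_indep_family I x \<longleftrightarrow>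
     (\<forall>F (c :: 'i \<Rightarrow> int). finite F \<longrightarrow> F \<subseteq> I \<longrightarrow>
        (\<Sum>i\<in>F. zsmult (c i) (x i)) = 0 \<longrightarrow> (\<forall>i\<in>F. c i = 0))"

end

theory Submission
  imports Defs
begin

text \<open>
  If the \<open>a\<^sub>i\<close> with \<open>i > 0\<close> are already independent we are done. Otherwise fix a
  nontrivial relation \<open>\<Sum>\<^sub>F c\<^sub>i a\<^sub>i = 0\<close> and take \<open>N = max F\<close>. Writing
  \<open>b\<^sub>i = a\<^sub>i - a\<^sub>0\<close>, it becomes \<open>\<Sum>\<^sub>F c\<^sub>i b\<^sub>i = -s a\<^sub>0\<close> with \<open>s = \<Sum> c\<^sub>i\<close>, and any relation
  \<open>\<Sum>\<^sub>G d\<^sub>i a\<^sub>i = 0\<close> with \<open>G\<close> above \<open>N\<close> becomes \<open>\<Sum>\<^sub>G d\<^sub>i b\<^sub>i = -t a\<^sub>0\<close> with \<open>t = \<Sum> d\<^sub>i\<close>.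
  Eliminating \<open>a\<^sub>0\<close> gives \<open>\<Sum>\<^sub>F t c\<^sub>i b\<^sub>i = \<Sum>\<^sub>G s d\<^sub>i b\<^sub>i\<close> over disjoint supports, so
  independence of the \<open>b\<^sub>i\<close> forces \<open>t c\<^sub>i = 0\<close>, so \<open>t = 0\<close> as some \<open>c\<^sub>i \<noteq> 0\<close>, hence \<open>\<Sum>\<^sub>G d\<^sub>i b\<^sub>i = 0\<close>
  and all \<open>d\<^sub>i = 0\<close>.
\<close>

lemma zsmult_0_left [simp]: "zsmult 0 x = 0"
  by (simp add: zsmult_def)

lemma zsmult_neg_of_nat: "zsmult (- int m) x = - (((+) x) ^^ m) 0"
  by (cases "m = 0") (simp_all add: zsmult_def)

lemma zsmult_add1: "zsmult (k + 1) x = zsmult k x + x"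
proof (cases "0 \<le> k")
  case True
  then have "nat (k + 1) = Suc (nat k)" by simp
  with True show ?thesis by (simp add: zsmult_def add.commute)
next
  case False
  define m where "m = nat (- k) - 1"
  with False have "k = - int (Suc m)" and "k + 1 = - int m" by simp_all
  then show ?thesis
    by (simp only: zsmult_neg_of_nat funpow.simps o_apply) (simp add: algebra_simps)
qed

lemma zsmult_1_left [simp]: "zsmult 1 x = x"
  using zsmult_add1[of 0 x] by simp

lemma zsmult_diff1: "zsmult (k - 1) x = zsmult k x - x"
  using zsmult_add1[of "k - 1" x] by simp

lemma zsmult_add_left: "zsmult (k + l) x = zsmult k x + zsmult l x"
  by (induction l rule: int_induct[where k = 0])
    (simp_all add: zsmult_add1 zsmult_diff1 add_diff_eq flip: add.assoc)

lemma zsmult_minus_left: "zsmult (- k) x = - zsmult k x"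
  using zsmult_add_left[of k "- k" x] by (simp add: eq_neg_iff_add_eq_0 add.commute)

lemma zsmult_diff_left: "zsmult (k - l) x = zsmult k x - zsmult l x"
  using zsmult_add_left[of k "- l" x] by (simp add: zsmult_minus_left)

lemma zsmult_add_right: "zsmult k (x + y) = zsmult k x + zsmult k y"
  by (induction k rule: int_induct[where k = 0])
    (simp_all add: zsmult_add1 zsmult_diff1 algebra_simps)

lemma zsmult_0_right [simp]: "zsmult k 0 = 0"
  using zsmult_add_right[of k 0 0] by simp

lemma zsmult_minus_right: "zsmult k (- x) = - zsmult k x"
  using zsmult_add_right[of k x "- x"] by (simp add: eq_neg_iff_add_eq_0 add.commute)

lemma zsmult_diff_right: "zsmult k (x - y) = zsmult k x - zsmult k y"
  using zsmult_add_right[of k x "- y"] by (simp add: zsmult_minus_right)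

lemma zsmult_mult: "zsmult (k * l) x = zsmult k (zsmult l x)"
  by (induction k rule: int_induct[where k = 0])
    (simp_all add: zsmult_add1 zsmult_diff1 zsmult_add_left zsmult_diff_left
      distrib_right left_diff_distrib)

lemma zsmult_sum_left: "zsmult (\<Sum>i\<in>F. c i) x = (\<Sum>i\<in>F. zsmult (c i) x)"
  by (induction F rule: infinite_finite_induct) (simp_all add: zsmult_add_left)

lemma zsmult_sum_right: "zsmult k (\<Sum>i\<in>F. f i) = (\<Sum>i\<in>F. zsmult k (f i))"
  by (induction F rule: infinite_finite_induct) (simp_all add: zsmult_add_right)

lemma zsmult_sum_zsmult:
  "zsmult k (\<Sum>i\<in>F. zsmult (c i) (x i)) = (\<Sum>i\<in>F. zsmult (k * c i) (x i))"
  by (simp add: zsmult_sum_right zsmult_mult)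

lemma sum_zsmult_diff_right:
  "(\<Sum>i\<in>F. zsmult (c i) (x i - z)) = (\<Sum>i\<in>F. zsmult (c i) (x i)) - zsmult (sum c F) z"
  by (simp add: zsmult_diff_right sum_subtractf zsmult_sum_left)

lemma lin_indep_familyD:
  assumes "lin_indep_family I x" "finite F" "F \<subseteq> I" "(\<Sum>i\<in>F. zsmult (c i) (x i)) = 0" "i \<in> F"
  shows "c i = 0"
  using assms unfolding lin_indep_family_def by blast

lemma lin_indep_family_disjoint_sums_eq:
  assumes indep: "lin_indep_family I x"
    and "finite F" "finite G" "F \<subseteq> I" "G \<subseteq> I" "F \<inter> G = {}"
    and eq: "(\<Sum>i\<in>F. zsmult (c i) (x i)) = (\<Sum>i\<in>G. zsmult (d i) (x i))"
    and "i \<in> F"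
  shows "c i = 0"
proof -
  define e where "e i = (if i \<in> F then c i else - d i)" for i
  have "(\<Sum>i\<in>F. zsmult (e i) (x i)) = (\<Sum>i\<in>F. zsmult (c i) (x i))"
    by (simp add: e_def)
  moreover have "(\<Sum>i\<in>G. zsmult (e i) (x i)) = (\<Sum>i\<in>G. zsmult (- d i) (x i))"
    using \<open>F \<inter> G = {}\<close> by (intro sum.cong) (auto simp: e_def)
  ultimately have "(\<Sum>i\<in>F \<union> G. zsmult (e i) (x i))
      = (\<Sum>i\<in>F. zsmult (c i) (x i)) - (\<Sum>i\<in>G. zsmult (d i) (x i))"
    using assms by (simp add: sum.union_disjoint zsmult_minus_left sum_negf)
  with eq have "(\<Sum>i\<in>F \<union> G. zsmult (e i) (x i)) = 0" by simp
  then have "e i = 0"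
    using lin_indep_familyD[OF indep] assms by blast
  with \<open>i \<in> F\<close> show ?thesis by (simp add: e_def)
qed

lemma lin_indep_family_off_relation:
  assumes indep: "lin_indep_family I (\<lambda>i. a i - z)"
    and F: "finite F" "F \<subseteq> I" "(\<Sum>i\<in>F. zsmult (c i) (a i)) = 0" "j \<in> F" "c j \<noteq> 0"
    and J: "J \<subseteq> I" "J \<inter> F = {}"
  shows "lin_indep_family J a"
  unfolding lin_indep_family_def
proof (intro allI impI)
  fix G and d :: "_ \<Rightarrow> int"
  assume G: "finite G" "G \<subseteq> J" "(\<Sum>i\<in>G. zsmult (d i) (a i)) = 0"
  define s where "s = sum c F"
  define t where "t = sum d G"
  have F_shifted: "(\<Sum>i\<in>F. zsmult (c i) (a i - z)) = - zsmult s z"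
    using F(3) by (simp add: sum_zsmult_diff_right s_def)
  have G_shifted: "(\<Sum>i\<in>G. zsmult (d i) (a i - z)) = - zsmult t z"
    using G(3) by (simp add: sum_zsmult_diff_right t_def)
  have "(\<Sum>i\<in>F. zsmult (t * c i) (a i - z)) = zsmult t (- zsmult s z)"
    by (simp only: F_shifted flip: zsmult_sum_zsmult)
  also have "\<dots> = zsmult s (- zsmult t z)"
    by (simp only: zsmult_minus_right flip: zsmult_mult) (simp only: mult.commute)
  also have "\<dots> = (\<Sum>i\<in>G. zsmult (s * d i) (a i - z))"
    by (simp only: zsmult_sum_zsmult flip: G_shifted)
  finally have a0_eliminated:
    "(\<Sum>i\<in>F. zsmult (t * c i) (a i - z)) = (\<Sum>i\<in>G. zsmult (s * d i) (a i - z))" .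
  have "t * c j = 0"
    by (intro lin_indep_family_disjoint_sums_eq[OF indep _ _ _ _ _ a0_eliminated])
      (use F G J in auto)
  with F(5) have "t = 0" by simp
  with G_shifted have "(\<Sum>i\<in>G. zsmult (d i) (a i - z)) = 0" by simp
  with G J show "\<forall>i\<in>G. d i = 0"
    using lin_indep_familyD[OF indep] by blast
qed

theorem lemmaA4:
  fixes a :: "nat \<Rightarrow> 'a::ab_group_add"
  assumes "lin_indep_family {i. 1 \<le> i} (\<lambda>i. a i - a 0)"
  shows "\<exists>N. lin_indep_family {i. N < i} a"
proof (cases "lin_indep_family {i. 0 < i} a")
  case False
  then obtain F c j where F: "finite F" "F \<subseteq> {i. 0 < i}"
    "(\<Sum>i\<in>F. zsmult (c i) (a i)) = 0" "j \<in> F" "c j \<noteq> 0"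
    unfolding lin_indep_family_def by blast
  have "lin_indep_family {i. Max F < i} a"
    by (rule lin_indep_family_off_relation[OF assms F(1) _ F(3-5)])
      (use F(1,2) Max_ge in \<open>fastforce+\<close>)
  then show ?thesis by blast
qed blast

end
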